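(* Let $n\ge2$, $\lambda>0$, and let $\mathbf{r}\in\mathbb{R}^n$ have pairwise distinct coordinates, with $r_{(n)}=\max_ir_i$, $r_{(1)}=\min_ir_i$ attained at indices $i^\star$ and $j^\star$ respectively. Then $$\sup_{(\boldsymbol{\pi},\mathbf{q})\in\Delta_n\times\Delta_n}\Big\{\langle\mathbf{q}-\boldsymbol{\pi},\mathbf{r}\rangle-\lambda H(\mathbf{q}\|\boldsymbol{\pi})\Big\}=\lambda\log\Big(\frac{e^{r_{(n)}/\lambda}-e^{r_{(1)}/\lambda}}{r_{(n)}-r_{(1)}}\Big)-\frac{e^{r_{(n)}/\lambda}r_{(1)}-e^{r_{(1)}/\lambda}r_{(n)}}{e^{r_{(n)}/\lambda}-e^{r_{(1)}/\lambda}}+\lambda\log\lambda-\lambda,$$ and the supremum is attained at $(\boldsymbol{\pi}^\star,\mathbf{q}^\star)$ where $$\pi^\star_{i^\star}=\frac{e^{r_{i^\star}/\lambda}-e^{r_{j^\star}/\lambda}-\lambda^{-1}(r_{i^\star}-r_{j^\star})e^{r_{j^\star}/\lambda}}{\lambda^{-1}(r_{i^\star}-r_{j^\star})(e^{r_{i^\star}/\lambda}-e^{r_{j^\star}/\lambda})},\quad\pi^\star_{j^\star}=1-\pi^\star_{i^\star},\quad\pi^\star_k=0\ (k\notin\{i^\star,j^\star\}),$$ and $q^\star_i=\pi^\star_ie^{r_i/\lambda}/\sum_j\pi^\star_je^{r_j/\lambda}$ for $i=1,\dots,n$.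
   Context: $\Delta_n=\{\mathbf{x}\in[0,1]^n:\sum_ix_i=1\}$; $\supp(\mathbf{x})=\{i:x_i>0\}$. Relative entropy: $H(\mathbf{q}\|\boldsymbol{\pi})=\sum_{i\in\supp(\mathbf{q})}q_i\log(q_i/\pi_i)$ if $\supp(\mathbf{q})\subseteq\supp(\boldsymbol{\pi})$ and $+\infty$ otherwise. *)

theory Defs
  imports "HOL-Analysis.Analysis" "HOL-Library.Extended_Real"
begin

text \<open>Vectors in R^n are functions on a finite index type 'n (n = CARD('n)).\<close>

definition prob_simplex :: "('n::finite \<Rightarrow> real) set" where
  "prob_simplex = {x. (\<forall>i. 0 \<le> x i \<and> x i \<le> 1) \<and> (\<Sum>i\<in>UNIV. x i) = 1}"

definition supp_vec :: "('n::finite \<Rightarrow> real) \<Rightarrow> 'n set" where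
  "supp_vec x = {i. x i > 0}"

definition rel_entropy :: "('n::finite \<Rightarrow> real) \<Rightarrow> ('n \<Rightarrow> real) \<Rightarrow> ereal" where
  "rel_entropy q p =
     (if supp_vec q \<subseteq> supp_vec p then ereal (\<Sum>i\<in>supp_vec q. q i * ln (q i / p i)) else \<infinity>)"

definition objective :: "real \<Rightarrow> ('n::finite \<Rightarrow> real) \<Rightarrow> ('n \<Rightarrow> real) \<Rightarrow> ('n \<Rightarrow> real) \<Rightarrow> ereal" where
  "objective lam r p q = ereal (\<Sum>i\<in>UNIV. (q i - p i) * r i) - ereal lam * rel_entropy q p"

end

theory Submission
  imports Defs
begin

text \<open>For fixed \<open>\<pi>\<close>, the supremum over \<open>q\<close> is the Gibbs variational principle:
\<open>\<langle>q, r\<rangle> - \<lambda> H(q\<parallel>\<pi>) \<le> \<lambda> log Z(\<pi>)\<close>, where \<open>Z(\<pi>) = \<Sigma>\<^sub>i \<pi>\<^sub>i e\<^bsup>r\<^sub>i/\<lambda>\<^esup>\<close>, with equality at the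
tilt \<open>q \<propto> \<pi> e\<^bsup>r/\<lambda>\<^esup>\<close>. It remains to maximise \<open>\<lambda> log Z(\<pi>) - \<langle>\<pi>, r\<rangle>\<close> over \<open>\<pi>\<close>.
Let \<open>s\<close> be the slope of the chord of \<open>x \<mapsto> e\<^bsup>x/\<lambda>\<^esup>\<close> over \<open>[min r, max r]\<close>. Bounding
\<open>log\<close> by its tangent at \<open>\<lambda> s\<close> turns the objective into \<open>\<lambda> log (\<lambda> s) - \<lambda>\<close> plus the
\<open>\<pi>\<close>-average of \<open>e\<^bsup>r\<^sub>i/\<lambda>\<^esup>/s - r\<^sub>i\<close>; this convex function of \<open>r\<^sub>i\<close> takes the same value at
both ends of the chord, hence is maximal there. Equality holds for the distribution on
the two extreme coordinates whose partition function is exactly \<open>\<lambda> s\<close>.\<close>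

definition gibbs_partition :: "real \<Rightarrow> ('n::finite \<Rightarrow> real) \<Rightarrow> ('n \<Rightarrow> real) \<Rightarrow> real" where
  "gibbs_partition lam r p = (\<Sum>i\<in>UNIV. p i * exp (r i / lam))"

definition gibbs_tilt :: "real \<Rightarrow> ('n::finite \<Rightarrow> real) \<Rightarrow> ('n \<Rightarrow> real) \<Rightarrow> 'n \<Rightarrow> real" where
  "gibbs_tilt lam r p = (\<lambda>i. p i * exp (r i / lam) / gibbs_partition lam r p)"

definition chord_slope :: "real \<Rightarrow> real \<Rightarrow> real \<Rightarrow> real" where
  "chord_slope lam m M = (exp (M / lam) - exp (m / lam)) / (M - m)"

definition two_point_value :: "real \<Rightarrow> real \<Rightarrow> real \<Rightarrow> real" where
  "two_point_value lam m M = lam * ln ((exp (M / lam) - exp (m / lam)) / (M - m))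
     - (exp (M / lam) * m - exp (m / lam) * M) / (exp (M / lam) - exp (m / lam))
     + lam * ln lam - lam"

definition two_point_weight :: "real \<Rightarrow> real \<Rightarrow> real \<Rightarrow> real" where
  "two_point_weight lam m M =
     (exp (M / lam) - exp (m / lam) - (M - m) / lam * exp (m / lam))
     / ((M - m) / lam * (exp (M / lam) - exp (m / lam)))"

definition two_point_dist :: "'n \<Rightarrow> 'n \<Rightarrow> real \<Rightarrow> 'n \<Rightarrow> real" where
  "two_point_dist a b t = (\<lambda>k. if k = a then t else if k = b then 1 - t else 0)"

lemma ln_le_tangent:
  fixes x s :: real
  assumes "x > 0" "s > 0"
  shows "ln x \<le> ln s + x / s - 1"
  using ln_le_minus_one[of "x / s"] assms by (simp add: ln_div)

lemma convex_on_exp_divide: "convex_on UNIV (\<lambda>x. exp (x / lam))"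
proof (rule convex_onI)
  fix t x y :: real
  assume "0 < t" "t < 1"
  then have "exp ((1 - t) * (x / lam) + t * (y / lam)) \<le> (1 - t) * exp (x / lam) + t * exp (y / lam)"
    using convex_onD[OF exp_convex, of t "x / lam" "y / lam"] by simp
  then show "exp (((1 - t) *\<^sub>R x + t *\<^sub>R y) / lam) \<le> (1 - t) * exp (x / lam) + t * exp (y / lam)"
    by (simp add: add_divide_distrib)
qed simp

lemma chord_slope_pos:
  assumes "m < M" "lam > 0"
  shows "chord_slope lam m M > 0"
  using assms by (simp add: chord_slope_def divide_strict_right_mono)

lemma exp_div_chord_slope_sub_le:
  assumes "m \<le> x" "x \<le> M" "m < M" "lam > 0"
  shows "exp (x / lam) / chord_slope lam m M - x \<le> exp (m / lam) / chord_slope lam m M - m"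
proof -
  let ?s = "chord_slope lam m M"
  have "convex_on {m..M} (\<lambda>x. exp (x / lam))"
    using convex_on_exp_divide by (rule convex_on_subset) auto
  then have "exp (x / lam) \<le> ?s * (x - m) + exp (m / lam)"
    using convex_onD_Icc'[of m M "\<lambda>x. exp (x / lam)" x] assms by (simp add: chord_slope_def)
  then have "(exp (x / lam) - exp (m / lam)) / ?s \<le> x - m"
    using chord_slope_pos[OF assms(3,4)] by (simp add: pos_divide_le_eq mult.commute)
  then show ?thesis by (simp add: diff_divide_distrib)
qed

lemma two_point_value_eq:
  assumes "m < M" "lam > 0"
  shows "two_point_value lam m M
           = lam * ln (lam * chord_slope lam m M) - lam + exp (m / lam) / chord_slope lam m M - m"
proof -
  have D: "exp (M / lam) - exp (m / lam) > 0"
    using assms by (simp add: divide_strict_right_mono)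
  have "lam * ln (lam * chord_slope lam m M) = lam * ln lam + lam * ln (chord_slope lam m M)"
    using assms chord_slope_pos[OF assms] by (simp add: ln_mult distrib_left)
  moreover have "exp (m / lam) / chord_slope lam m M
      = m - (exp (M / lam) * m - exp (m / lam) * M) / (exp (M / lam) - exp (m / lam))"
    using D assms by (simp add: chord_slope_def field_simps)
  ultimately show ?thesis
    unfolding two_point_value_def chord_slope_def[symmetric] by linarith
qed

lemma two_point_weight_eq:
  assumes "m < M" "lam > 0"
  shows "two_point_weight lam m M
           = (lam * chord_slope lam m M - exp (m / lam)) / (exp (M / lam) - exp (m / lam))"
proof -
  define c where "c = (M - m) / lam"
  define D where "D = exp (M / lam) - exp (m / lam)"
  have "c \<noteq> 0" "D \<noteq> 0"
    using assms by (auto simp: c_def D_def divide_strict_right_mono)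
  then have "(D - c * exp (m / lam)) / (c * D) = (D / c - exp (m / lam)) / D"
    by (simp add: field_simps)
  moreover have "D / c = lam * chord_slope lam m M"
    by (simp add: c_def D_def chord_slope_def)
  ultimately show ?thesis
    by (simp add: two_point_weight_def c_def D_def)
qed

lemma two_point_weight_bounds:
  assumes "m < M" "lam > 0"
  shows "0 \<le> two_point_weight lam m M" "two_point_weight lam m M \<le> 1"
proof -
  define x where "x = (M - m) / lam"
  have x: "x > 0" using assms by (simp add: x_def)
  have E1: "exp (M / lam) = exp (m / lam) * exp x"
    using assms by (simp add: x_def exp_add[symmetric] diff_divide_distrib)
  have den: "x * (exp (M / lam) - exp (m / lam)) > 0"
    using assms x by (simp add: divide_strict_right_mono)
  have weight: "two_point_weight lam m M
      = exp (m / lam) * (exp x - 1 - x) / (x * (exp (M / lam) - exp (m / lam)))"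
    unfolding two_point_weight_def x_def[symmetric] by (simp add: E1 algebra_simps)
  have "0 \<le> exp x - 1 - x" using exp_ge_add_one_self[of x] by linarith
  then show "0 \<le> two_point_weight lam m M"
    unfolding weight using den by (intro divide_nonneg_pos) simp_all
  have "(1 - x) * exp x \<le> exp (-x) * exp x"
    using exp_ge_add_one_self[of "-x"] by (intro mult_right_mono) simp_all
  then have "exp x - 1 - x \<le> x * (exp x - 1)"
    by (simp add: exp_minus algebra_simps)
  then have "exp (m / lam) * (exp x - 1 - x) \<le> exp (m / lam) * (x * (exp x - 1))"
    by (rule mult_left_mono) simp
  then have "exp (m / lam) * (exp x - 1 - x) \<le> x * (exp (M / lam) - exp (m / lam))"
    by (simp add: E1 algebra_simps)
  then show "two_point_weight lam m M \<le> 1"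
    unfolding weight using den by simp
qed

lemma two_point_weight_partition:
  assumes "m < M" "lam > 0"
  defines "t \<equiv> two_point_weight lam m M"
  shows "t * exp (M / lam) + (1 - t) * exp (m / lam) = lam * chord_slope lam m M"
    and "t * M + (1 - t) * m = m + lam - exp (m / lam) / chord_slope lam m M"
proof -
  let ?s = "chord_slope lam m M"
  have s: "?s > 0" using assms(1,2) by (rule chord_slope_pos)
  have D: "exp (M / lam) - exp (m / lam) = ?s * (M - m)"
    using assms by (simp add: chord_slope_def)
  have t: "t * (?s * (M - m)) = lam * ?s - exp (m / lam)"
    using s assms unfolding t_def two_point_weight_eq[OF assms(1,2)] D by simp
  have "t * exp (M / lam) + (1 - t) * exp (m / lam) = exp (m / lam) + t * (exp (M / lam) - exp (m / lam))"
    by (simp add: algebra_simps)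
  then show "t * exp (M / lam) + (1 - t) * exp (m / lam) = lam * ?s"
    using t D by simp
  have "t * (M - m) = lam - exp (m / lam) / ?s"
    using t s by (simp add: field_simps)
  then show "t * M + (1 - t) * m = m + lam - exp (m / lam) / ?s"
    by (simp add: algebra_simps)
qed

lemma prob_simplex_nonneg: "p \<in> prob_simplex \<Longrightarrow> 0 \<le> p i"
  by (simp add: prob_simplex_def)

lemma prob_simplex_sum: "p \<in> prob_simplex \<Longrightarrow> (\<Sum>i\<in>UNIV. p i) = 1"
  by (simp add: prob_simplex_def)

lemma prob_simplexI:
  fixes p :: "'n::finite \<Rightarrow> real"
  assumes "\<And>i. 0 \<le> p i" "(\<Sum>i\<in>UNIV. p i) = 1"
  shows "p \<in> prob_simplex"
proof -
  have "p i \<le> 1" for i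
    using member_le_sum[of i UNIV p] assms by simp
  then show ?thesis using assms by (simp add: prob_simplex_def)
qed

lemma sum_mult_supp_vec:
  fixes q :: "'n::finite \<Rightarrow> real"
  assumes "\<And>i. 0 \<le> q i"
  shows "(\<Sum>i\<in>UNIV. q i * f i) = (\<Sum>i\<in>supp_vec q. q i * f i)"
  by (rule sum.mono_neutral_right) (use assms in \<open>auto simp: supp_vec_def order_le_less\<close>)

lemma sum_supp_vec_prob: "q \<in> prob_simplex \<Longrightarrow> (\<Sum>i\<in>supp_vec q. q i) = 1"
  using sum_mult_supp_vec[of q "\<lambda>_. 1"] prob_simplex_nonneg prob_simplex_sum by fastforce

lemma gibbs_partition_pos:
  assumes "p \<in> prob_simplex"
  shows "gibbs_partition lam r p > 0"
proof -
  obtain i where "p i \<noteq> 0"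
    using prob_simplex_sum[OF assms] by force
  then have "p i > 0" using prob_simplex_nonneg[OF assms, of i] by simp
  then show ?thesis unfolding gibbs_partition_def
    by (intro sum_pos2[where i = i]) (simp_all add: prob_simplex_nonneg[OF assms])
qed

lemma two_point_dist_sum:
  fixes f :: "'n::finite \<Rightarrow> real"
  assumes "a \<noteq> b"
  shows "(\<Sum>k\<in>UNIV. two_point_dist a b t k * f k) = t * f a + (1 - t) * f b"
proof -
  have "(\<Sum>k\<in>UNIV. two_point_dist a b t k * f k) = (\<Sum>k\<in>{a, b}. two_point_dist a b t k * f k)"
    by (rule sum.mono_neutral_right) (auto simp: two_point_dist_def)
  then show ?thesis using assms by (simp add: two_point_dist_def)
qed

lemma two_point_dist_prob_simplex:
  assumes "a \<noteq> b" "0 \<le> t" "t \<le> 1"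
  shows "two_point_dist a b t \<in> prob_simplex"
  using two_point_dist_sum[OF assms(1), of t "\<lambda>_. 1"] assms
  by (intro prob_simplexI) (auto simp: two_point_dist_def)

subsection \<open>The Gibbs variational principle\<close>

lemma objective_eq:
  assumes "supp_vec q \<subseteq> supp_vec p"
  shows "objective lam r p q = ereal ((\<Sum>i\<in>UNIV. q i * r i) - (\<Sum>i\<in>UNIV. p i * r i)
                                  - lam * (\<Sum>i\<in>supp_vec q. q i * ln (q i / p i)))"
  using assms by (simp add: objective_def rel_entropy_def left_diff_distrib sum_subtractf)

lemma gibbs_term_le:
  fixes q p x lam Z :: real
  assumes "q > 0" "p > 0" "lam > 0" "Z > 0"
  shows "q * x - lam * (q * ln (q / p)) \<le> lam * (p * exp (x / lam) / Z - q + q * ln Z)"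
proof -
  have "ln (p * exp (x / lam) / Z) \<le> ln q + p * exp (x / lam) / Z / q - 1"
    using assms by (intro ln_le_tangent) simp_all
  then have tangent: "x / lam - ln (q / p) \<le> p * exp (x / lam) / Z / q - 1 + ln Z"
    using assms by (simp add: ln_div ln_mult)
  have "q * x - lam * (q * ln (q / p)) = lam * q * (x / lam - ln (q / p))"
    using assms by (simp add: algebra_simps)
  also have "\<dots> \<le> lam * q * (p * exp (x / lam) / Z / q - 1 + ln Z)"
    using tangent assms by (intro mult_left_mono) simp_all
  also have "\<dots> = lam * (p * exp (x / lam) / Z - q + q * ln Z)"
    using assms by (simp add: algebra_simps)
  finally show ?thesis .
qed

lemma gibbs_variational_le:
  fixes p q r :: "'n::finite \<Rightarrow> real"
  assumes p: "p \<in> prob_simplex" and q: "q \<in> prob_simplex"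
    and supp: "supp_vec q \<subseteq> supp_vec p" and lam: "lam > 0"
  shows "(\<Sum>i\<in>UNIV. q i * r i) - lam * (\<Sum>i\<in>supp_vec q. q i * ln (q i / p i))
           \<le> lam * ln (gibbs_partition lam r p)"
proof -
  define Z where "Z = gibbs_partition lam r p"
  have Z: "Z > 0" unfolding Z_def using p by (rule gibbs_partition_pos)
  have "(\<Sum>i\<in>UNIV. q i * r i) - lam * (\<Sum>i\<in>supp_vec q. q i * ln (q i / p i))
        = (\<Sum>i\<in>supp_vec q. q i * r i - lam * (q i * ln (q i / p i)))"
    using sum_mult_supp_vec[OF prob_simplex_nonneg[OF q]]
    by (simp add: sum_subtractf sum_distrib_left)
  also have "\<dots> \<le> (\<Sum>i\<in>supp_vec q. lam * (p i * exp (r i / lam) / Z - q i + q i * ln Z))"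
  proof (rule sum_mono)
    fix i assume "i \<in> supp_vec q"
    then have "q i > 0" "p i > 0" using supp by (auto simp: supp_vec_def)
    then show "q i * r i - lam * (q i * ln (q i / p i)) \<le> lam * (p i * exp (r i / lam) / Z - q i + q i * ln Z)"
      using gibbs_term_le lam Z by blast
  qed
  also have "\<dots> = lam * ((\<Sum>i\<in>supp_vec q. p i * exp (r i / lam)) / Z - 1 + ln Z)"
    using sum_supp_vec_prob[OF q]
    by (simp add: sum_distrib_left[symmetric] sum.distrib sum_subtractf sum_divide_distrib[symmetric]
        sum_distrib_right[symmetric])
  also have "\<dots> \<le> lam * (Z / Z - 1 + ln Z)"
  proof -
    have "(\<Sum>i\<in>supp_vec q. p i * exp (r i / lam)) \<le> Z"
      unfolding Z_def gibbs_partition_def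
      by (rule sum_mono2) (simp_all add: prob_simplex_nonneg[OF p])
    then show ?thesis using Z lam by (simp add: divide_right_mono)
  qed
  finally show ?thesis using Z by (simp add: Z_def)
qed

lemma gibbs_tilt_prob_simplex:
  assumes "p \<in> prob_simplex"
  shows "gibbs_tilt lam r p \<in> prob_simplex"
proof (rule prob_simplexI)
  have Z: "gibbs_partition lam r p > 0" using assms by (rule gibbs_partition_pos)
  show "0 \<le> gibbs_tilt lam r p i" for i
    using Z prob_simplex_nonneg[OF assms, of i] by (simp add: gibbs_tilt_def)
  show "(\<Sum>i\<in>UNIV. gibbs_tilt lam r p i) = 1"
    using Z by (simp add: gibbs_tilt_def sum_divide_distrib[symmetric] gibbs_partition_def[symmetric])
qed

lemma objective_gibbs_tilt:
  fixes p r :: "'n::finite \<Rightarrow> real"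
  assumes p: "p \<in> prob_simplex" and lam: "lam > 0"
  shows "objective lam r p (gibbs_tilt lam r p)
           = ereal (lam * ln (gibbs_partition lam r p) - (\<Sum>i\<in>UNIV. p i * r i))"
proof -
  define Z where "Z = gibbs_partition lam r p"
  define q where "q = gibbs_tilt lam r p"
  have Z: "Z > 0" unfolding Z_def using p by (rule gibbs_partition_pos)
  have qS: "q \<in> prob_simplex" unfolding q_def using p by (rule gibbs_tilt_prob_simplex)
  have supp: "supp_vec q = supp_vec p"
    using Z by (auto simp: supp_vec_def q_def gibbs_tilt_def Z_def[symmetric] zero_less_mult_iff zero_less_divide_iff)
  have "(\<Sum>i\<in>supp_vec q. q i * ln (q i / p i)) = (\<Sum>i\<in>supp_vec q. q i * r i / lam - q i * ln Z)"
  proof (rule sum.cong)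
    fix i assume "i \<in> supp_vec q"
    then have "p i > 0" using supp unfolding supp_vec_def by blast
    then have "q i / p i = exp (r i / lam) / Z"
      by (simp add: q_def gibbs_tilt_def Z_def)
    then show "q i * ln (q i / p i) = q i * r i / lam - q i * ln Z"
      using Z by (simp add: ln_div right_diff_distrib)
  qed simp
  also have "\<dots> = (\<Sum>i\<in>UNIV. q i * r i) / lam - ln Z"
    using sum_supp_vec_prob[OF qS] sum_mult_supp_vec[where f = r, OF prob_simplex_nonneg[OF qS]]
    by (simp add: sum_subtractf sum_divide_distrib sum_distrib_right[symmetric])
  finally have "lam * (\<Sum>i\<in>supp_vec q. q i * ln (q i / p i)) = (\<Sum>i\<in>UNIV. q i * r i) - lam * ln Z"
    using lam by (simp add: right_diff_distrib)
  then show ?thesis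
    using supp by (simp add: objective_eq q_def[symmetric] Z_def[symmetric])
qed

subsection \<open>Optimising over the prior\<close>

lemma log_partition_sub_mean_le:
  fixes p r :: "'n::finite \<Rightarrow> real"
  assumes p: "p \<in> prob_simplex" and lam: "lam > 0" and mM: "m < M"
    and bounds: "\<And>i. m \<le> r i \<and> r i \<le> M"
  shows "lam * ln (gibbs_partition lam r p) - (\<Sum>i\<in>UNIV. p i * r i) \<le> two_point_value lam m M"
proof -
  define s where "s = chord_slope lam m M"
  define Z where "Z = gibbs_partition lam r p"
  have s: "s > 0" unfolding s_def using mM lam by (rule chord_slope_pos)
  have Z: "Z > 0" unfolding Z_def using p by (rule gibbs_partition_pos)
  have "lam * ln Z - (\<Sum>i\<in>UNIV. p i * r i)
        \<le> lam * (ln (lam * s) + Z / (lam * s) - 1) - (\<Sum>i\<in>UNIV. p i * r i)"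
    using ln_le_tangent[of Z "lam * s"] Z s lam by simp
  also have "\<dots> = lam * ln (lam * s) - lam + (\<Sum>i\<in>UNIV. p i * (exp (r i / lam) / s - r i))"
    using lam by (simp add: Z_def gibbs_partition_def algebra_simps sum_subtractf
        sum_distrib_left sum_divide_distrib)
  also have "\<dots> \<le> lam * ln (lam * s) - lam + (\<Sum>i\<in>UNIV. p i * (exp (m / lam) / s - m))"
    using exp_div_chord_slope_sub_le[OF _ _ mM lam] bounds prob_simplex_nonneg[OF p]
    by (simp add: s_def sum_mono mult_left_mono)
  also have "\<dots> = two_point_value lam m M"
    using prob_simplex_sum[OF p] two_point_value_eq[OF mM lam]
    by (simp add: s_def sum_distrib_right[symmetric])
  finally show ?thesis by (simp add: Z_def)
qed

lemma objective_le_two_point_value: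
  fixes p q r :: "'n::finite \<Rightarrow> real"
  assumes p: "p \<in> prob_simplex" and q: "q \<in> prob_simplex" and lam: "lam > 0" and mM: "m < M"
    and bounds: "\<And>i. m \<le> r i \<and> r i \<le> M"
  shows "objective lam r p q \<le> ereal (two_point_value lam m M)"
proof (cases "supp_vec q \<subseteq> supp_vec p")
  case False
  then show ?thesis using lam by (simp add: objective_def rel_entropy_def)
next
  case True
  have "(\<Sum>i\<in>UNIV. q i * r i) - (\<Sum>i\<in>UNIV. p i * r i) - lam * (\<Sum>i\<in>supp_vec q. q i * ln (q i / p i))
          \<le> two_point_value lam m M"
    using gibbs_variational_le[OF p q True lam, of r] log_partition_sub_mean_le[where r = r, OF p lam mM bounds]
    by linarith
  then show ?thesis by (simp add: objective_eq[OF True])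
qed

lemma two_point_dist_optimal:
  fixes r :: "'n::finite \<Rightarrow> real"
  assumes "a \<noteq> b" "r a = M" "r b = m" "m < M" "lam > 0"
  defines "p \<equiv> two_point_dist a b (two_point_weight lam m M)"
  shows "p \<in> prob_simplex"
    and "lam * ln (gibbs_partition lam r p) - (\<Sum>i\<in>UNIV. p i * r i) = two_point_value lam m M"
proof -
  show "p \<in> prob_simplex"
    unfolding p_def using assms two_point_weight_bounds by (intro two_point_dist_prob_simplex)
  show "lam * ln (gibbs_partition lam r p) - (\<Sum>i\<in>UNIV. p i * r i) = two_point_value lam m M"
    using two_point_weight_partition[OF assms(4,5)] two_point_value_eq[OF assms(4,5)]
    by (simp add: p_def gibbs_partition_def two_point_dist_sum assms)
qed

lemma Min_range_less_Max_range:
  fixes r :: "'n::finite \<Rightarrow> 'a::linorder"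
  assumes "CARD('n) \<ge> 2" "inj r"
  shows "Min (range r) < Max (range r)"
proof -
  obtain a b :: 'n where "a \<noteq> b"
    using assms(1) card_le_Suc0_iff_eq[of "UNIV :: 'n set"] by fastforce
  then have "r a \<noteq> r b" using assms(2) by (meson injD)
  moreover have "Min (range r) \<le> r a" "Min (range r) \<le> r b" "r a \<le> Max (range r)" "r b \<le> Max (range r)"
    by auto
  ultimately show ?thesis by (metis antisym not_le order_trans)
qed

theorem mainTheorem17:
  fixes r :: "'n::finite \<Rightarrow> real" and lam :: real and istar jstar :: 'n
    and pstar qstar :: "'n \<Rightarrow> real"
  assumes n2: "CARD('n) \<ge> 2"
    and lam_pos: "lam > 0"
    and distinct: "inj r"
    and imax: "r istar = Max (range r)"
    and jmin: "r jstar = Min (range r)"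
    and pstar_def: "pstar = (\<lambda>k.
           if k = istar then
             (exp (r istar / lam) - exp (r jstar / lam) - (r istar - r jstar) / lam * exp (r jstar / lam))
             / ((r istar - r jstar) / lam * (exp (r istar / lam) - exp (r jstar / lam)))
           else if k = jstar then
             1 - (exp (r istar / lam) - exp (r jstar / lam) - (r istar - r jstar) / lam * exp (r jstar / lam))
                 / ((r istar - r jstar) / lam * (exp (r istar / lam) - exp (r jstar / lam)))
           else 0)"
    and qstar_def: "qstar = (\<lambda>i. pstar i * exp (r i / lam) / (\<Sum>j\<in>UNIV. pstar j * exp (r j / lam)))"
  shows "(SUP pq\<in>prob_simplex \<times> prob_simplex. objective lam r (fst pq) (snd pq)) =
           ereal (lam * ln ((exp (Max (range r) / lam) - exp (Min (range r) / lam)) / (Max (range r) - Min (range r)))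
                  - (exp (Max (range r) / lam) * Min (range r) - exp (Min (range r) / lam) * Max (range r))
                    / (exp (Max (range r) / lam) - exp (Min (range r) / lam))
                  + lam * ln lam - lam)
       \<and> pstar \<in> prob_simplex \<and> qstar \<in> prob_simplex
       \<and> objective lam r pstar qstar = (SUP pq\<in>prob_simplex \<times> prob_simplex. objective lam r (fst pq) (snd pq))"
proof -
  define M where "M = Max (range r)"
  define m where "m = Min (range r)"
  have bounds: "\<And>i. m \<le> r i \<and> r i \<le> M" by (simp add: M_def m_def)
  have mM: "m < M" unfolding M_def m_def using n2 distinct by (rule Min_range_less_Max_range)
  have ij: "istar \<noteq> jstar" using imax jmin mM by (auto simp: M_def m_def)
  have pstar_two_point: "pstar = two_point_dist istar jstar (two_point_weight lam m M)"
    unfolding pstar_def two_point_dist_def two_point_weight_def imax jmin M_def m_def ..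
  have qstar_tilt: "qstar = gibbs_tilt lam r pstar"
    unfolding qstar_def gibbs_tilt_def gibbs_partition_def ..
  have pS: "pstar \<in> prob_simplex"
    and pstar_value: "lam * ln (gibbs_partition lam r pstar) - (\<Sum>i\<in>UNIV. pstar i * r i) = two_point_value lam m M"
    using two_point_dist_optimal[OF ij _ _ mM lam_pos] imax jmin
    unfolding pstar_two_point M_def m_def by auto
  have qS: "qstar \<in> prob_simplex" unfolding qstar_tilt using pS by (rule gibbs_tilt_prob_simplex)
  have attained: "objective lam r pstar qstar = ereal (two_point_value lam m M)"
    unfolding qstar_tilt objective_gibbs_tilt[OF pS lam_pos] pstar_value ..
  have "(SUP pq\<in>prob_simplex \<times> prob_simplex. objective lam r (fst pq) (snd pq)) = ereal (two_point_value lam m M)"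
  proof (rule antisym)
    show "(SUP pq\<in>prob_simplex \<times> prob_simplex. objective lam r (fst pq) (snd pq)) \<le> ereal (two_point_value lam m M)"
      by (rule SUP_least) (auto intro: objective_le_two_point_value[where r = r, OF _ _ lam_pos mM bounds])
    show "ereal (two_point_value lam m M) \<le> (SUP pq\<in>prob_simplex \<times> prob_simplex. objective lam r (fst pq) (snd pq))"
      using pS qS attained by (intro SUP_upper2[of "(pstar, qstar)"]) auto
  qed
  then show ?thesis
    using pS qS attained by (simp add: two_point_value_def M_def m_def)
qed

end
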